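(* Let $G$ be a group with $\mathrm{cl}(G)<\infty$ and let $1\to\mathbb{Z}_2\to\tilde G\to G\to 1$ be any double cover (short exact sequence of groups with kernel of order $2$). Then $\mathrm{cl}(\tilde G)<\infty$.
   Context: $[a,b]=aba^{-1}b^{-1}$. For a group $G$ and $x\in[G,G]$, $\mathrm{cl}_G(x)$ is the least $k\ge0$ with $x$ a product of $k$ commutators of elements of $G$; the commutator width is $\mathrm{cl}(G)=\sup_{x\in[G,G]}\mathrm{cl}_G(x)\in\mathbb{Z}_{\ge0}\cup\{\infty\}$. *)

theory Defs
  imports "HOL-Algebra.Algebra"
begin

definition commutator :: "('a, 'm) monoid_scheme \<Rightarrow> 'a \<Rightarrow> 'a \<Rightarrow> 'a" where
  "commutator G a b = a \<otimes>\<^bsub>G\<^esub> b \<otimes>\<^bsub>G\<^esub> inv\<^bsub>G\<^esub> a \<otimes>\<^bsub>G\<^esub> inv\<^bsub>G\<^esub> b"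

definition comm_prod :: "('a, 'm) monoid_scheme \<Rightarrow> ('a \<times> 'a) list \<Rightarrow> 'a" where
  "comm_prod G ps = foldr (\<lambda>p acc. commutator G (fst p) (snd p) \<otimes>\<^bsub>G\<^esub> acc) ps \<one>\<^bsub>G\<^esub>"

definition comm_length_le :: "('a, 'm) monoid_scheme \<Rightarrow> nat \<Rightarrow> 'a \<Rightarrow> bool" where
  "comm_length_le G k x \<longleftrightarrow>
     (\<exists>ps. length ps \<le> k \<and> set ps \<subseteq> carrier G \<times> carrier G \<and> x = comm_prod G ps)"

definition finite_commutator_width :: "('a, 'm) monoid_scheme \<Rightarrow> bool" where
  "finite_commutator_width G \<longleftrightarrow>
     (\<exists>N::nat. \<forall>x \<in> derived G (carrier G). comm_length_le G N x)"

end

theory Submission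
  imports Defs
begin

text \<open>If \<open>\<pi> : H \<rightarrow> G\<close> is onto with finite kernel and every element of \<open>[G,G]\<close> is a product of
  at most \<open>N\<close> commutators, write \<open>x \<in> [H,H]\<close> as follows: lift the \<open>N\<close> commutators expressing
  \<open>\<pi> x\<close> to commutators in \<open>H\<close> with product \<open>c\<close>; then \<open>c\<inverse> x\<close> lies in the finite set
  \<open>ker \<pi> \<inter> [H,H]\<close>, whose elements have commutator length at most some \<open>M\<close>. Hence
  \<open>cl(H) \<le> N + M\<close>.\<close>

lemma comm_prod_Nil [simp]: "comm_prod G [] = \<one>\<^bsub>G\<^esub>"
  by (simp add: comm_prod_def)

lemma comm_prod_Cons [simp]:
  "comm_prod G ((a, b) # ps) = commutator G a b \<otimes>\<^bsub>G\<^esub> comm_prod G ps"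
  by (simp add: comm_prod_def)

context group
begin

lemma commutator_closed [intro, simp]:
  "a \<in> carrier G \<Longrightarrow> b \<in> carrier G \<Longrightarrow> commutator G a b \<in> carrier G"
  by (simp add: commutator_def)

lemma comm_prod_closed [intro, simp]:
  "set ps \<subseteq> carrier G \<times> carrier G \<Longrightarrow> comm_prod G ps \<in> carrier G"
  by (induction ps) auto

lemma comm_prod_append:
  assumes "set ps \<subseteq> carrier G \<times> carrier G" "set qs \<subseteq> carrier G \<times> carrier G"
  shows "comm_prod G (ps @ qs) = comm_prod G ps \<otimes> comm_prod G qs"
  using assms(1)
proof (induction ps)
  case Nil
  then show ?case using assms(2) by simp
next
  case (Cons p ps)
  then obtain a b where "p = (a, b)" "a \<in> carrier G" "b \<in> carrier G" by auto
  with Cons assms(2) show ?case by (simp add: m_assoc)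
qed

lemma comm_prod_in_derived:
  assumes "set ps \<subseteq> carrier G \<times> carrier G"
  shows "comm_prod G ps \<in> derived G (carrier G)"
  using assms
proof (induction ps)
  case Nil
  then show ?case by (simp add: derived_def generate.one)
next
  case (Cons p ps)
  then obtain a b where p: "p = (a, b)" "a \<in> carrier G" "b \<in> carrier G" by auto
  then have "commutator G a b \<in> derived G (carrier G)"
    unfolding derived_def commutator_def by (blast intro: generate.incl)
  with Cons p show ?case
    by (simp add: subgroup.m_closed derived_is_subgroup)
qed

lemma derived_imp_comm_prod:
  assumes "x \<in> derived G (carrier G)"
  obtains ps where "set ps \<subseteq> carrier G \<times> carrier G" "x = comm_prod G ps"
proof -
  have "\<exists>ps. set ps \<subseteq> carrier G \<times> carrier G \<and> x = comm_prod G ps"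
    using assms unfolding derived_def
  proof (induction rule: generate.induct)
    case one
    show ?case by (intro exI[of _ "[]"]) simp
  next
    case (incl h)
    then obtain a b where "a \<in> carrier G" "b \<in> carrier G" "h = commutator G a b"
      by (auto simp: commutator_def)
    then show ?case by (intro exI[of _ "[(a, b)]"]) simp
  next
    case (inv h)
    then obtain a b where ab: "a \<in> carrier G" "b \<in> carrier G" "h = commutator G a b"
      by (auto simp: commutator_def)
    then have "inv h = commutator G b a"
      by (simp add: commutator_def inv_mult_group m_assoc)
    with ab show ?case by (intro exI[of _ "[(b, a)]"]) simp
  next
    case (eng h1 h2)
    then obtain ps qs where "set ps \<subseteq> carrier G \<times> carrier G" "h1 = comm_prod G ps"
      "set qs \<subseteq> carrier G \<times> carrier G" "h2 = comm_prod G qs" by blast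
    then show ?case by (intro exI[of _ "ps @ qs"]) (simp add: comm_prod_append)
  qed
  with that show ?thesis by blast
qed

lemma comm_length_le_mono:
  "comm_length_le G m x \<Longrightarrow> m \<le> n \<Longrightarrow> comm_length_le G n x"
  unfolding comm_length_le_def by (metis order_trans)

lemma comm_length_le_mult:
  assumes "comm_length_le G m x" "comm_length_le G n y"
  shows "comm_length_le G (m + n) (x \<otimes> y)"
proof -
  obtain ps qs where "length ps \<le> m" "set ps \<subseteq> carrier G \<times> carrier G" "x = comm_prod G ps"
    "length qs \<le> n" "set qs \<subseteq> carrier G \<times> carrier G" "y = comm_prod G qs"
    using assms unfolding comm_length_le_def by blast
  then show ?thesis
    unfolding comm_length_le_def by (intro exI[of _ "ps @ qs"]) (simp add: comm_prod_append)
qed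

lemma finite_derived_subset_comm_length_bounded:
  assumes "finite K" "K \<subseteq> derived G (carrier G)"
  obtains M where "\<And>k. k \<in> K \<Longrightarrow> comm_length_le G M k"
proof -
  have "\<exists>m. comm_length_le G m k" if "k \<in> K" for k
    using that assms(2) derived_imp_comm_prod unfolding comm_length_le_def by blast
  then obtain m where m: "\<And>k. k \<in> K \<Longrightarrow> comm_length_le G (m k) k" by metis
  have "comm_length_le G (Max (m ` K)) k" if "k \<in> K" for k
    using m[OF that] assms(1) that by (auto intro: comm_length_le_mono)
  with that show ?thesis by blast
qed

end

lemma (in group_hom) comm_prod_image:
  assumes "set ps \<subseteq> carrier G \<times> carrier G"
  shows "h (comm_prod G ps) = comm_prod H (map (\<lambda>(a, b). (h a, h b)) ps)"
  using assms
proof (induction ps)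
  case Nil
  then show ?case by simp
next
  case (Cons p ps)
  then obtain a b where "p = (a, b)" "a \<in> carrier G" "b \<in> carrier G" by auto
  with Cons show ?case by (simp add: commutator_def)
qed

lemma (in group_hom) comm_length_le_lift:
  assumes surj: "h ` carrier G = carrier H" and "comm_length_le H N y"
  obtains c where "comm_length_le G N c" "h c = y"
proof -
  obtain ps where ps: "length ps \<le> N" "set ps \<subseteq> carrier H \<times> carrier H" "y = comm_prod H ps"
    using assms(2) unfolding comm_length_le_def by blast
  have "\<exists>qs. set qs \<subseteq> carrier G \<times> carrier G \<and> map (\<lambda>(a, b). (h a, h b)) qs = ps"
    using ps(2)
  proof (induction ps)
    case Nil
    then show ?case by simp
  next
    case (Cons p ps)
    then obtain qs where qs: "set qs \<subseteq> carrier G \<times> carrier G" "map (\<lambda>(a, b). (h a, h b)) qs = ps"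
      by auto
    from Cons.prems have "fst p \<in> h ` carrier G" "snd p \<in> h ` carrier G"
      using surj by auto
    then obtain a b where "p = (h a, h b)" "a \<in> carrier G" "b \<in> carrier G"
      by (metis imageE prod.collapse)
    with qs show ?case by (intro exI[of _ "(a, b) # qs"]) auto
  qed
  then obtain qs where qs: "set qs \<subseteq> carrier G \<times> carrier G" "map (\<lambda>(a, b). (h a, h b)) qs = ps"
    by blast
  then have "length qs \<le> N" using ps(1) by auto
  with qs ps(3) show ?thesis
    using that comm_prod_image unfolding comm_length_le_def by blast
qed

theorem finite_commutator_width_finite_kernel:
  assumes hom: "group_hom H G \<pi>" and surj: "\<pi> ` carrier H = carrier G"
    and fin: "finite (kernel H G \<pi>)" and width: "finite_commutator_width G"
  shows "finite_commutator_width H"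
proof -
  interpret H: group H using hom by (rule group_hom.axioms(1))
  interpret \<pi>: group_hom H G \<pi> by fact
  obtain N where N: "\<And>y. y \<in> derived G (carrier G) \<Longrightarrow> comm_length_le G N y"
    using width unfolding finite_commutator_width_def by blast
  define K where "K = kernel H G \<pi> \<inter> derived H (carrier H)"
  obtain M where M: "\<And>k. k \<in> K \<Longrightarrow> comm_length_le H M k"
    using H.finite_derived_subset_comm_length_bounded[of K] fin unfolding K_def by blast
  have "comm_length_le H (N + M) x" if x: "x \<in> derived H (carrier H)" for x
  proof -
    have sub: "subgroup (derived H (carrier H)) H" by (simp add: H.derived_is_subgroup)
    then have xH: "x \<in> carrier H" using x subgroup.subset by blast
    have "\<pi> x \<in> derived G (carrier G)" using x \<pi>.derived_img[of "carrier H"] surj by auto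
    then obtain c where c: "comm_length_le H N c" "\<pi> c = \<pi> x"
      using \<pi>.comm_length_le_lift[OF surj N] by blast
    then obtain ps where "set ps \<subseteq> carrier H \<times> carrier H" "c = comm_prod H ps"
      unfolding comm_length_le_def by blast
    then have cH: "c \<in> carrier H" and cD: "c \<in> derived H (carrier H)"
      by (simp_all add: H.comm_prod_in_derived)
    have "inv\<^bsub>H\<^esub> c \<otimes>\<^bsub>H\<^esub> x \<in> kernel H G \<pi>"
      using cH xH c(2) by (simp add: kernel_def)
    moreover have "inv\<^bsub>H\<^esub> c \<otimes>\<^bsub>H\<^esub> x \<in> derived H (carrier H)"
      using cD x sub by (simp add: subgroup.m_closed subgroup.m_inv_closed)
    ultimately have "comm_length_le H M (inv\<^bsub>H\<^esub> c \<otimes>\<^bsub>H\<^esub> x)"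
      using M unfolding K_def by blast
    then have "comm_length_le H (N + M) (c \<otimes>\<^bsub>H\<^esub> (inv\<^bsub>H\<^esub> c \<otimes>\<^bsub>H\<^esub> x))"
      using c(1) by (rule H.comm_length_le_mult[rotated])
    then show ?thesis using cH xH by (simp add: H.m_assoc[symmetric])
  qed
  then show ?thesis unfolding finite_commutator_width_def by blast
qed

theorem mainTheorem7:
  fixes G :: "('a, 'm) monoid_scheme" and H :: "('b, 'n) monoid_scheme" and \<pi> :: "'b \<Rightarrow> 'a"
  assumes "group G" and "group H"
    and "finite_commutator_width G"
    and "\<pi> \<in> hom H G"
    and "\<pi> ` carrier H = carrier G"
    and "card (kernel H G \<pi>) = 2"
  shows "finite_commutator_width H"
proof (rule finite_commutator_width_finite_kernel)
  show "group_hom H G \<pi>"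
    using assms(1,2,4) by (simp add: group_hom_def group_hom_axioms_def)
  show "finite (kernel H G \<pi>)"
    using assms(6) by (intro card_ge_0_finite) simp
qed (use assms in auto)

end
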